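(* For positive integers $f,l$ consider the hypercube Hamiltonian $H=\sum_{C}\bigl(\sum_{i\in C}S_i-M_C\bigr)^2$ with integers $M_C$ (notation as in the context), and let $n_{ze}$ be the number of zero energy assignments. (i) If $n_{ze}>0$, then the number of global minima of $H$ equals $n_{ze}$. (ii) There is an absolute constant $c>0$ such that for all positive integers $f,l$ there exists a choice of integers $(M_C)_C$ with $$n_{ze}\geq 2^N\Bigl(\frac{c}{f\sqrt{l}}\Bigr)^{n_C}.$$
   Context: Fix positive integers $f,l$ and let $N=l^f$. The variables $S_i\in\{-1,+1\}$ are indexed by vectors $i=(x_1,\dots,x_f)$ with $x_a\in\{1,\dots,l\}$. A column $C$ is specified by an index $b\in\{1,\dots,f\}$ and integers $y_a\in\{1,\dots,l\}$ for all $a\neq b$; a variable $(x_1,\dots,x_f)$ lies in $C$ iff $x_a=y_a$ for all $a\neq b$. The number of columns is $n_C=f\,l^{f-1}$. Given an integer $M_C$ for each column, $H(S)=\sum_C\bigl(\sum_{i\in C}S_i-M_C\bigr)^2$. A zero energy assignment is an $S$ with $\sum_{i\in C}S_i=M_C$ for every column $C$. A global minimum is an assignment minimizing $H$. *)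

theory Defs
  imports Complex_Main "HOL-Library.FuncSet"
begin

text \<open>Sites: vectors (x_1,...,x_f) with coordinates in {1..l}, encoded 0-based as
  lists of length f with entries < l.\<close>
definition sites :: "nat \<Rightarrow> nat \<Rightarrow> nat list set" where
  "sites f l = {xs. length xs = f \<and> (\<forall>a<f. xs ! a < l)}"

text \<open>A column is a pair (b, ys): direction b < f and the fixed coordinates ys!a for a \<noteq> b;
  the unused entry ys!b is normalised to 0, so columns correspond bijectively to the
  f * l^(f-1) choices in the paper.\<close>
definition columns :: "nat \<Rightarrow> nat \<Rightarrow> (nat \<times> nat list) set" where
  "columns f l = {(b, ys). b < f \<and> length ys = f \<and> ys ! b = 0 \<and>
                           (\<forall>a<f. a \<noteq> b \<longrightarrow> ys ! a < l)}"

definition col_sites :: "nat \<Rightarrow> nat \<Rightarrow> nat \<times> nat list \<Rightarrow> nat list set" where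
  "col_sites f l C = {xs \<in> sites f l. \<forall>a<f. a \<noteq> fst C \<longrightarrow> xs ! a = snd C ! a}"

definition assignments :: "nat \<Rightarrow> nat \<Rightarrow> (nat list \<Rightarrow> int) set" where
  "assignments f l = PiE (sites f l) (\<lambda>_. {-1, 1})"

definition hamiltonian ::
  "nat \<Rightarrow> nat \<Rightarrow> (nat \<times> nat list \<Rightarrow> int) \<Rightarrow> (nat list \<Rightarrow> int) \<Rightarrow> int" where
  "hamiltonian f l M S = (\<Sum>C\<in>columns f l. ((\<Sum>i\<in>col_sites f l C. S i) - M C)^2)"

definition zero_energy ::
  "nat \<Rightarrow> nat \<Rightarrow> (nat \<times> nat list \<Rightarrow> int) \<Rightarrow> (nat list \<Rightarrow> int) set" where
  "zero_energy f l M = {S \<in> assignments f l.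
      \<forall>C\<in>columns f l. (\<Sum>i\<in>col_sites f l C. S i) = M C}"

definition global_minima ::
  "nat \<Rightarrow> nat \<Rightarrow> (nat \<times> nat list \<Rightarrow> int) \<Rightarrow> (nat list \<Rightarrow> int) set" where
  "global_minima f l M = {S \<in> assignments f l.
      \<forall>T\<in>assignments f l. hamiltonian f l M S \<le> hamiltonian f l M T}"

end

theory Submission
  imports Defs
begin

text \<open>
  Part (i): \<open>H\<close> is a sum of squares, so \<open>H \<ge> 0\<close> with equality exactly at the zero energy
  assignments; if one exists, these are the global minima.

  Part (ii): choose \<open>M\<close> as the vector of column sums \<open>\<sigma>(S)\<close> of a well-chosen assignment \<open>S\<close>,
  so that \<open>n\<^sub>z\<^sub>e\<close> is the size of the fibre of \<open>\<sigma>\<close> through \<open>S\<close>. Weight a column-sum vector by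
  \<open>w(M) = \<Prod>\<^sub>C (1 + M\<^sub>C\<^sup>2/l)\<close>. The sum of \<open>1/w\<close> over all possible vectors factorises over the
  columns and is at most \<open>(5\<surd>l)^n\<^sub>C\<close>, so at most half of the \<open>2\<^sup>N\<close> assignments lie in fibres with
  \<open>|fibre| \<cdot> w < 2\<^sup>N / (2 (5\<surd>l)^n\<^sub>C)\<close>. Each column sum has second moment \<open>|C| \<le> l\<close>, so by Markov's
  inequality at most a third of the assignments have \<open>\<Sum>\<^sub>C \<sigma>\<^sub>C\<^sup>2/l \<ge> 3 n\<^sub>C\<close>; for the others
  \<open>w \<le> exp (\<Sum>\<^sub>C \<sigma>\<^sub>C\<^sup>2/l) < e^(3 n\<^sub>C)\<close>. An assignment avoiding both bad sets has a fibre of size at least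
  \<open>2\<^sup>N / (2 (5 e\<^sup>3 \<surd>l)^n\<^sub>C)\<close>, which gives the bound with \<open>c = 1/(10 e\<^sup>3)\<close>.
\<close>

lemma abs_spin:
  assumes "S \<in> PiE I (\<lambda>_. {-1, 1::int})" "i \<in> I"
  shows "\<bar>S i\<bar> = 1"
  using PiE_mem[OF assms] by auto

lemma sum_spin_product_eq_0:
  assumes "i \<in> I" "i \<noteq> j"
  shows "(\<Sum>S\<in>PiE I (\<lambda>_. {-1, 1::int}). S i * S j) = 0"
proof -
  let ?A = "PiE I (\<lambda>_. {-1, 1::int})"
  let ?flip = "\<lambda>S. S(i := - S i)"
  have "?flip S \<in> ?A" if "S \<in> ?A" for S
    using that assms(1) by (auto simp: PiE_iff extensional_def)
  then have "bij_betw ?flip ?A ?A"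
    by (intro bij_betwI[where g = ?flip]) auto
  then have "(\<Sum>S\<in>?A. S i * S j) = (\<Sum>S\<in>?A. ?flip S i * ?flip S j)"
    by (rule sum.reindex_bij_betw[symmetric])
  also have "\<dots> = - (\<Sum>S\<in>?A. S i * S j)"
    using assms by (simp add: sum_negf)
  finally show ?thesis by simp
qed

lemma sum_square_spin_sum:
  assumes "finite K" "K \<subseteq> I"
  shows "(\<Sum>S\<in>PiE I (\<lambda>_. {-1, 1::int}). (\<Sum>i\<in>K. S i)^2)
           = int (card K) * int (card (PiE I (\<lambda>_. {-1, 1::int})))"
proof -
  let ?A = "PiE I (\<lambda>_. {-1, 1::int})"
  have square: "S i * S i = 1" if "S \<in> ?A" "i \<in> K" for S i
  proof -
    have "\<bar>S i\<bar> = 1" using abs_spin[OF that(1)] that assms by blast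
    then show ?thesis by (metis abs_mult_self_eq mult_1_right)
  qed
  have "(\<Sum>S\<in>?A. (\<Sum>i\<in>K. S i)^2) = (\<Sum>i\<in>K. \<Sum>j\<in>K. \<Sum>S\<in>?A. S i * S j)"
    by (simp add: power2_eq_square sum_product sum.swap[of _ ?A])
  also have "\<dots> = (\<Sum>i\<in>K. \<Sum>j\<in>K. if i = j then int (card ?A) else 0)"
    using assms square sum_spin_product_eq_0[of _ I] by (intro sum.cong refl) auto
  also have "\<dots> = int (card K) * int (card ?A)"
    using assms by simp
  finally show ?thesis .
qed

lemma abs_spin_sum_le:
  assumes "S \<in> PiE I (\<lambda>_. {-1, 1::int})" "K \<subseteq> I"
  shows "\<bar>\<Sum>i\<in>K. S i\<bar> \<le> int (card K)"
proof -
  have "\<bar>\<Sum>i\<in>K. S i\<bar> \<le> (\<Sum>i\<in>K. \<bar>S i\<bar>)" by (rule sum_abs)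
  also have "\<dots> = (\<Sum>i\<in>K. 1)"
    using assms(2) by (intro sum.cong refl abs_spin[OF assms(1)]) auto
  finally show ?thesis by simp
qed

lemma mult_card_superlevel_le_sum:
  fixes g :: "'a \<Rightarrow> real"
  assumes "finite A" "\<And>x. x \<in> A \<Longrightarrow> g x \<ge> 0"
  shows "a * card {x \<in> A. a \<le> g x} \<le> sum g A"
proof -
  have "a * card {x \<in> A. a \<le> g x} = (\<Sum>x\<in>{x \<in> A. a \<le> g x}. a)" by simp
  also have "\<dots> \<le> (\<Sum>x\<in>{x \<in> A. a \<le> g x}. g x)" by (rule sum_mono) simp
  also have "\<dots> \<le> sum g A" using assms by (intro sum_mono2) auto
  finally show ?thesis .
qed

lemma card_light_fibres_le:
  fixes \<sigma> :: "'a \<Rightarrow> 'b" and w :: "'b \<Rightarrow> real"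
  assumes "finite A" "finite P" "\<sigma> ` A \<subseteq> P" "\<And>M. M \<in> P \<Longrightarrow> w M > 0" "t \<ge> 0"
  shows "card {x \<in> A. card {y \<in> A. \<sigma> y = \<sigma> x} * w (\<sigma> x) < t} \<le> t * (\<Sum>M\<in>P. 1 / w M)"
proof -
  define L where "L = {x \<in> A. card {y \<in> A. \<sigma> y = \<sigma> x} * w (\<sigma> x) < t}"
  have fibre: "{y \<in> L. \<sigma> y = M} = {y \<in> A. \<sigma> y = M}" if "M \<in> \<sigma> ` L" for M
    using that unfolding L_def by auto
  have small: "card {y \<in> A. \<sigma> y = M} \<le> t / w M" if M_image: "M \<in> \<sigma> ` L" for M
  proof -
    obtain x where "x \<in> L" and M: "M = \<sigma> x" using M_image by blast
    then have "x \<in> A" "card {y \<in> A. \<sigma> y = M} * w M < t" unfolding L_def by auto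
    moreover have "w M > 0" using assms(3,4) \<open>x \<in> A\<close> M by blast
    ultimately show ?thesis by (simp add: pos_le_divide_eq)
  qed
  have "finite L" using assms(1) unfolding L_def by simp
  have "card L = (\<Sum>x\<in>L. 1)" by simp
  also have "\<dots> = (\<Sum>M\<in>\<sigma> ` L. \<Sum>x\<in>{y \<in> L. \<sigma> y = M}. 1)"
    using \<open>finite L\<close> by (rule sum.image_gen)
  also have "\<dots> = (\<Sum>M\<in>\<sigma> ` L. card {y \<in> A. \<sigma> y = M})"
    using fibre by simp
  finally have "real (card L) = (\<Sum>M\<in>\<sigma> ` L. real (card {y \<in> A. \<sigma> y = M}))"
    by simp
  also have "\<dots> \<le> (\<Sum>M\<in>\<sigma> ` L. t / w M)"
    using small by (rule sum_mono)
  also have "\<dots> \<le> (\<Sum>M\<in>P. t / w M)"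
    using assms by (intro sum_mono2) (auto simp: L_def intro!: divide_nonneg_pos)
  finally show ?thesis
    by (simp add: L_def sum_distrib_left)
qed

lemma inverse_one_plus_square_le_telescoping:
  fixes k x :: real
  assumes "k > 0" "x \<ge> 0"
  shows "1 / (1 + ((x + 1) / k)^2) \<le> 2 * k^2 / (k + x) - 2 * k^2 / (k + x + 1)"
proof -
  have "1 / (1 + ((x + 1) / k)^2) = k^2 / (k^2 + (x + 1)^2)"
    using assms by (simp add: field_simps)
  also have "\<dots> \<le> k^2 / ((k + x) * (k + x + 1) / 2)"
  proof (rule divide_left_mono)
    show "(k + x) * (k + x + 1) / 2 \<le> k^2 + (x + 1)^2"
      using zero_le_power2[of "k - x - 1"] assms by (simp add: power2_eq_square algebra_simps)
  qed (use assms in \<open>auto intro!: mult_pos_pos add_pos_nonneg\<close>)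
  also have "\<dots> = 2 * k^2 / (k + x) - 2 * k^2 / (k + x + 1)"
    using assms by (simp add: field_simps)
  finally show ?thesis .
qed

lemma sum_inverse_one_plus_square_le:
  fixes k :: real
  assumes "k \<ge> 1"
  shows "(\<Sum>s\<in>{-int n..int n}. 1 / (1 + (of_int s / k)^2)) \<le> 5 * k"
proof -
  let ?g = "\<lambda>s::int. 1 / (1 + (of_int s / k)^2)"
  let ?t = "\<lambda>n::nat. 2 * k^2 / (k + n)"
  have "(\<Sum>s\<in>{-int n..int n}. ?g s) \<le> 1 + 4 * k - 2 * ?t n"
  proof (induction n)
    case 0
    then show ?case using assms by (simp add: power2_eq_square)
  next
    case (Suc n)
    have "{-int (Suc n)..int (Suc n)} = insert (int n + 1) (insert (- (int n + 1)) {-int n..int n})"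
      by auto
    then have "(\<Sum>s\<in>{-int (Suc n)..int (Suc n)}. ?g s) = 2 * ?g (int n + 1) + (\<Sum>s\<in>{-int n..int n}. ?g s)"
      by (simp add: power2_eq_square algebra_simps)
    moreover have "?g (int n + 1) \<le> ?t n - ?t (Suc n)"
      using inverse_one_plus_square_le_telescoping[of k "real n"] assms by (simp add: add_ac)
    ultimately show ?case
      using Suc.IH by linarith
  qed
  also have "\<dots> \<le> 5 * k"
  proof -
    have "?t n \<ge> 0" using assms by simp
    then show ?thesis using assms by linarith
  qed
  finally show ?thesis .
qed

lemma sum_inverse_prod_weights_le:
  fixes k :: real
  assumes "finite I" "k \<ge> 1"
  shows "(\<Sum>M\<in>PiE I (\<lambda>_. {-int n..int n}). 1 / (\<Prod>i\<in>I. 1 + (of_int (M i) / k)^2))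
           \<le> (5 * k) ^ card I"
proof -
  have "(\<Sum>M\<in>PiE I (\<lambda>_. {-int n..int n}). 1 / (\<Prod>i\<in>I. 1 + (of_int (M i) / k)^2))
      = (\<Sum>M\<in>PiE I (\<lambda>_. {-int n..int n}). \<Prod>i\<in>I. 1 / (1 + (of_int (M i) / k)^2))"
    by (simp add: prod_dividef)
  also have "\<dots> = (\<Prod>i\<in>I. \<Sum>s\<in>{-int n..int n}. 1 / (1 + (of_int s / k)^2))"
    using assms(1) by (subst prod_sum_PiE) auto
  also have "\<dots> \<le> (\<Prod>i\<in>I. 5 * k)"
    using sum_inverse_one_plus_square_le[OF assms(2)]
    by (intro prod_mono) (auto intro: sum_nonneg simp: add_pos_nonneg)
  finally show ?thesis by simp
qed

lemma sites_eq_lists: "sites f l = {xs. set xs \<subseteq> {..<l} \<and> length xs = f}"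
  unfolding sites_def by (auto simp: in_set_conv_nth) (metis nth_mem subsetD lessThan_iff)

lemma finite_sites: "finite (sites f l)"
  unfolding sites_eq_lists by (rule finite_lists_length_eq) simp

lemma card_sites: "card (sites f l) = l ^ f"
  unfolding sites_eq_lists by (simp add: card_lists_length_eq)

lemma columns_eq_Sigma:
  assumes "l > 0"
  shows "columns f l = (SIGMA b:{..<f}. {ys \<in> sites f l. ys ! b = 0})"
proof -
  have "(\<forall>a<f. a \<noteq> b \<longrightarrow> ys ! a < l) \<longleftrightarrow> (\<forall>a<f. ys ! a < l)" if "ys ! b = 0" for b ys
    using assms that by metis
  then show ?thesis
    unfolding columns_def sites_def by auto
qed

lemma card_sites_with_zero_coordinate:
  assumes "b < f" "l > 0"
  shows "card {ys \<in> sites f l. ys ! b = 0} = l ^ (f - 1)"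
proof -
  let ?Z = "{ys \<in> sites f l. ys ! b = 0}"
  have "bij_betw (\<lambda>(ys, j). ys[b := j]) (?Z \<times> {..<l}) (sites f l)"
    by (rule bij_betwI[where g = "\<lambda>xs. (xs[b := 0], xs ! b)"])
       (use assms in \<open>auto simp: sites_def nth_list_update list_update_same_conv\<close>)
  then have "card (?Z \<times> {..<l}) = card (sites f l)"
    by (rule bij_betw_same_card)
  then have "card ?Z * l = card (sites f l)"
    by (simp add: card_cartesian_product)
  also have "\<dots> = l ^ f"
    by (rule card_sites)
  finally have "card ?Z * l = l ^ f" .
  then show ?thesis
    using assms by (metis mult.commute power_eq_if less_nat_zero_code mult_right_cancel not_gr_zero)
qed

lemma finite_columns: "l > 0 \<Longrightarrow> finite (columns f l)"
  by (simp add: columns_eq_Sigma finite_sites)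

lemma card_columns: "l > 0 \<Longrightarrow> card (columns f l) = f * l ^ (f - 1)"
  by (simp add: columns_eq_Sigma finite_sites card_sites_with_zero_coordinate)

lemma col_sites_subset_sites: "col_sites f l C \<subseteq> sites f l"
  unfolding col_sites_def by auto

lemma finite_col_sites: "finite (col_sites f l C)"
  using finite_subset[OF col_sites_subset_sites finite_sites] .

lemma col_sites_subset_line:
  assumes "(b, ys) \<in> columns f l"
  shows "col_sites f l (b, ys) \<subseteq> (\<lambda>j. ys[b := j]) ` {..<l}"
proof
  fix xs assume xs: "xs \<in> col_sites f l (b, ys)"
  have "xs = ys[b := xs ! b]"
    using assms xs unfolding columns_def col_sites_def sites_def
    by (intro nth_equalityI) (auto simp: nth_list_update)
  moreover have "xs ! b < l"
    using assms xs unfolding columns_def col_sites_def sites_def by auto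
  ultimately show "xs \<in> (\<lambda>j. ys[b := j]) ` {..<l}" by blast
qed

lemma card_col_sites_le: "C \<in> columns f l \<Longrightarrow> card (col_sites f l C) \<le> l"
  using col_sites_subset_line[of "fst C" "snd C"] card_image_le[of "{..<l}"]
  by (metis card_lessThan card_mono finite_imageI finite_lessThan order_trans prod.collapse)

lemma finite_assignments: "finite (assignments f l)"
  unfolding assignments_def by (simp add: finite_PiE finite_sites)

lemma card_assignments: "card (assignments f l) = 2 ^ (l ^ f)"
  unfolding assignments_def by (simp add: card_PiE finite_sites card_sites numeral_2_eq_2)

lemma hamiltonian_nonneg: "hamiltonian f l M S \<ge> 0"
  unfolding hamiltonian_def by (simp add: sum_nonneg)

lemma hamiltonian_eq_0_iff:
  "l > 0 \<Longrightarrow> hamiltonian f l M S = 0 \<longleftrightarrow> (\<forall>C\<in>columns f l. (\<Sum>i\<in>col_sites f l C. S i) = M C)"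
  unfolding hamiltonian_def by (simp add: sum_nonneg_eq_0_iff finite_columns)

lemma global_minima_eq_zero_energy:
  assumes "l > 0" "zero_energy f l M \<noteq> {}"
  shows "global_minima f l M = zero_energy f l M"
proof -
  have zero: "S \<in> zero_energy f l M \<longleftrightarrow> S \<in> assignments f l \<and> hamiltonian f l M S = 0" for S
    using hamiltonian_eq_0_iff[OF assms(1)] unfolding zero_energy_def by auto
  obtain T where T: "T \<in> assignments f l" "hamiltonian f l M T = 0"
    using assms(2) zero by blast
  show ?thesis
  proof (intro set_eqI iffI)
    fix S assume "S \<in> global_minima f l M"
    then have "S \<in> assignments f l" "hamiltonian f l M S \<le> 0"
      using T unfolding global_minima_def by force+
    then show "S \<in> zero_energy f l M"
      using zero hamiltonian_nonneg[of f l M S] by simp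
  next
    fix S assume "S \<in> zero_energy f l M"
    then show "S \<in> global_minima f l M"
      using zero hamiltonian_nonneg unfolding global_minima_def by simp
  qed
qed

definition column_sums :: "nat \<Rightarrow> nat \<Rightarrow> (nat list \<Rightarrow> int) \<Rightarrow> nat \<times> nat list \<Rightarrow> int" where
  "column_sums f l S = restrict (\<lambda>C. \<Sum>i\<in>col_sites f l C. S i) (columns f l)"

definition column_energy :: "nat \<Rightarrow> nat \<Rightarrow> (nat list \<Rightarrow> int) \<Rightarrow> real" where
  "column_energy f l S = (\<Sum>C\<in>columns f l. (of_int (column_sums f l S C) / sqrt l)^2)"

definition column_weight :: "nat \<Rightarrow> nat \<Rightarrow> (nat \<times> nat list \<Rightarrow> int) \<Rightarrow> real" where
  "column_weight f l M = (\<Prod>C\<in>columns f l. 1 + (of_int (M C) / sqrt l)^2)"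

lemma zero_energy_column_sums:
  "zero_energy f l (column_sums f l S) = {T \<in> assignments f l. column_sums f l T = column_sums f l S}"
  unfolding zero_energy_def column_sums_def by (auto simp: fun_eq_iff restrict_def)

lemma column_sums_bounded:
  assumes "S \<in> assignments f l"
  shows "column_sums f l S \<in> PiE (columns f l) (\<lambda>_. {-int l..int l})"
proof -
  have "(\<Sum>i\<in>col_sites f l C. S i) \<in> {-int l..int l}" if "C \<in> columns f l" for C
  proof -
    have "\<bar>\<Sum>i\<in>col_sites f l C. S i\<bar> \<le> int l"
      using abs_spin_sum_le[OF assms[unfolded assignments_def] col_sites_subset_sites[of f l C]]
            card_col_sites_le[OF that] by linarith
    then show ?thesis by (auto simp: abs_le_iff)
  qed
  then show ?thesis
    unfolding column_sums_def by (simp add: restrict_PiE_iff)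
qed

lemma sum_column_energy_le:
  assumes "l > 0"
  shows "(\<Sum>S\<in>assignments f l. column_energy f l S) \<le> real (card (columns f l)) * real (card (assignments f l))"
proof -
  have column: "(\<Sum>S\<in>assignments f l. (of_int (column_sums f l S C) / sqrt l)^2) \<le> card (assignments f l)"
    if "C \<in> columns f l" for C
  proof -
    have "(\<Sum>S\<in>assignments f l. (of_int (column_sums f l S C) / sqrt l)^2)
        = (\<Sum>S\<in>assignments f l. of_int ((\<Sum>i\<in>col_sites f l C. S i)^2) / l)"
      using that by (intro sum.cong refl) (simp add: column_sums_def power_divide)
    also have "\<dots> = (\<Sum>S\<in>assignments f l. of_int ((\<Sum>i\<in>col_sites f l C. S i)^2)) / l"
      by (rule sum_divide_distrib[symmetric])
    also have "\<dots> = real (card (col_sites f l C)) * real (card (assignments f l)) / real l"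
      unfolding assignments_def of_int_sum[symmetric]
      by (subst sum_square_spin_sum) (auto simp: finite_col_sites col_sites_subset_sites)
    also have "\<dots> \<le> real l * real (card (assignments f l)) / real l"
    proof (rule divide_right_mono)
      show "real (card (col_sites f l C)) * real (card (assignments f l)) \<le> real l * real (card (assignments f l))"
        using card_col_sites_le[OF that] by (intro mult_right_mono) simp_all
    qed simp
    also have "\<dots> = card (assignments f l)"
      using assms by simp
    finally show ?thesis .
  qed
  have "(\<Sum>S\<in>assignments f l. column_energy f l S)
      = (\<Sum>C\<in>columns f l. \<Sum>S\<in>assignments f l. (of_int (column_sums f l S C) / sqrt l)^2)"
    unfolding column_energy_def by (rule sum.swap)
  also have "\<dots> \<le> (\<Sum>C\<in>columns f l. real (card (assignments f l)))"
    using column by (rule sum_mono)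
  finally show ?thesis by simp
qed

lemma column_weight_pos: "column_weight f l M > 0"
  unfolding column_weight_def by (simp add: prod_pos add_pos_nonneg)

lemma column_weight_le_exp_column_energy:
  assumes "l > 0"
  shows "column_weight f l (column_sums f l S) \<le> exp (column_energy f l S)"
proof -
  have "column_weight f l (column_sums f l S)
      \<le> (\<Prod>C\<in>columns f l. exp ((of_int (column_sums f l S C) / sqrt l)^2))"
    unfolding column_weight_def by (intro prod_mono) simp
  also have "\<dots> = exp (column_energy f l S)"
    unfolding column_energy_def using assms by (simp add: exp_sum finite_columns)
  finally show ?thesis .
qed

lemma card_high_energy_le:
  assumes "f > 0" "l > 0"
  shows "card {S \<in> assignments f l. 3 * real (card (columns f l)) \<le> column_energy f l S}
           \<le> card (assignments f l) / 3"
proof -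
  let ?n = "real (card (columns f l))"
  let ?H = "{S \<in> assignments f l. 3 * ?n \<le> column_energy f l S}"
  have "3 * ?n * card ?H \<le> (\<Sum>S\<in>assignments f l. column_energy f l S)"
    by (rule mult_card_superlevel_le_sum[OF finite_assignments]) (simp add: column_energy_def sum_nonneg)
  also have "\<dots> \<le> ?n * card (assignments f l)"
    using sum_column_energy_le[OF assms(2)] by simp
  finally have "(3 * card ?H) * ?n \<le> card (assignments f l) * ?n"
    by (simp add: algebra_simps)
  moreover have "?n > 0"
    using assms by (simp add: card_columns)
  ultimately show ?thesis
    by (simp add: mult_right_le_imp_le)
qed

lemma card_light_fibres_column_sums_le:
  assumes "l > 0" "t \<ge> 0"
  shows "card {S \<in> assignments f l.
            card {T \<in> assignments f l. column_sums f l T = column_sums f l S}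
              * column_weight f l (column_sums f l S) < t}
         \<le> t * (5 * sqrt l) ^ card (columns f l)" (is "real (card ?light) \<le> _")
proof -
  have "card ?light \<le> t * (\<Sum>M\<in>PiE (columns f l) (\<lambda>_. {-int l..int l}). 1 / column_weight f l M)"
    using assms column_sums_bounded column_weight_pos
    by (intro card_light_fibres_le) (auto simp: finite_columns finite_assignments finite_PiE)
  also have "\<dots> \<le> t * (5 * sqrt l) ^ card (columns f l)"
    using sum_inverse_prod_weights_le[where I = "columns f l" and k = "sqrt l" and n = l] assms
    unfolding column_weight_def by (intro mult_left_mono) (auto simp: finite_columns)
  finally show ?thesis .
qed

lemma exists_large_zero_energy:
  assumes "f > 0" "l > 0"
  shows "\<exists>M. 2 ^ (l ^ f) / (2 * (5 * sqrt l * exp 3) ^ (f * l ^ (f - 1))) \<le> card (zero_energy f l M)"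
proof -
  let ?\<sigma> = "column_sums f l" and ?w = "column_weight f l"
  define A where "A = assignments f l"
  define n where "n = card (columns f l)"
  define t where "t = card A / (2 * (5 * sqrt l) ^ n)"
  define heavy where "heavy = {S \<in> A. 3 * real n \<le> column_energy f l S}"
  define light where "light = {S \<in> A. card {T \<in> A. ?\<sigma> T = ?\<sigma> S} * ?w (?\<sigma> S) < t}"
  have "finite A" "card A > 0" "t \<ge> 0"
    using assms by (simp_all add: A_def t_def finite_assignments card_assignments)
  have "card heavy \<le> card A / 3"
    using card_high_energy_le[OF assms] by (simp add: heavy_def A_def n_def)
  moreover have "card light \<le> t * (5 * sqrt l) ^ n"
    using card_light_fibres_column_sums_le[OF assms(2) \<open>t \<ge> 0\<close>, of f]
    unfolding light_def A_def n_def .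
  moreover have "t * (5 * sqrt l) ^ n = card A / 2"
    using assms by (simp add: t_def)
  ultimately have "card (heavy \<union> light) < card A"
    using card_Un_le[of heavy light] \<open>card A > 0\<close> by linarith
  moreover have "heavy \<union> light \<subseteq> A"
    unfolding heavy_def light_def by auto
  ultimately have "heavy \<union> light \<subset> A"
    by auto
  then obtain S where S: "S \<in> A" "S \<notin> heavy" "S \<notin> light" by blast
  have "?w (?\<sigma> S) \<le> exp (column_energy f l S)"
    using assms(2) by (rule column_weight_le_exp_column_energy)
  also have "\<dots> \<le> exp 3 ^ n"
    using S unfolding heavy_def by (simp add: exp_of_nat_mult[symmetric] mult.commute)
  finally have "?w (?\<sigma> S) \<le> exp 3 ^ n" .
  moreover have "t \<le> card (zero_energy f l (?\<sigma> S)) * ?w (?\<sigma> S)"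
    using S unfolding light_def A_def zero_energy_column_sums by simp
  ultimately have "t / exp 3 ^ n \<le> card (zero_energy f l (?\<sigma> S))"
    by (simp add: pos_divide_le_eq) (meson mult_left_mono of_nat_0_le_iff order_trans)
  moreover have "t / exp 3 ^ n = 2 ^ (l ^ f) / (2 * (5 * sqrt l * exp 3) ^ (f * l ^ (f - 1)))"
    using assms by (simp add: t_def A_def n_def card_assignments card_columns power_mult_distrib mult.assoc)
  ultimately show ?thesis by auto
qed

theorem mainTheorem3:
  shows "(\<forall>(f::nat) (l::nat) M. f > 0 \<longrightarrow> l > 0 \<longrightarrow> card (zero_energy f l M) > 0 \<longrightarrow>
            card (global_minima f l M) = card (zero_energy f l M))
       \<and> (\<exists>c::real. c > 0 \<and> (\<forall>(f::nat) (l::nat). f > 0 \<longrightarrow> l > 0 \<longrightarrow>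
            (\<exists>M. real (card (zero_energy f l M)) \<ge>
                   2 ^ (l ^ f) * (c / (real f * sqrt (real l))) ^ (f * l ^ (f - 1)))))"
proof (intro conjI allI impI exI[of _ "1 / (10 * exp 3)"])
  fix f l :: nat and M
  assume "l > 0" "card (zero_energy f l M) > 0"
  then show "card (global_minima f l M) = card (zero_energy f l M)"
    by (simp add: global_minima_eq_zero_energy card_gt_0_iff)
next
  fix f l :: nat
  assume "f > 0" "l > 0"
  define n where "n = f * l ^ (f - 1)"
  define y where "y = 5 * sqrt l * exp 3"
  obtain M where M: "2 ^ (l ^ f) / (2 * y ^ n) \<le> card (zero_energy f l M)"
    using exists_large_zero_energy[OF \<open>f > 0\<close> \<open>l > 0\<close>] unfolding n_def y_def by blast
  have "n \<ge> 1" "y > 0"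
    using \<open>f > 0\<close> \<open>l > 0\<close> by (simp_all add: n_def y_def)
  have "(1 / (10 * exp 3) / (real f * sqrt l)) ^ n \<le> (1 / (2 * y)) ^ n"
    using \<open>f > 0\<close> \<open>l > 0\<close> unfolding y_def
    by (intro power_mono divide_left_mono) (auto simp: field_simps)
  also have "\<dots> = 1 / (2 ^ n * y ^ n)"
    by (simp add: power_divide power_mult_distrib)
  also have "\<dots> \<le> 1 / (2 * y ^ n)"
    using \<open>n \<ge> 1\<close> \<open>y > 0\<close> by (intro divide_left_mono mult_right_mono) (auto simp: self_le_power)
  finally have "2 ^ (l ^ f) * (1 / (10 * exp 3) / (real f * sqrt l)) ^ n \<le> 2 ^ (l ^ f) * (1 / (2 * y ^ n))"
    by (rule mult_left_mono) simp
  also have "\<dots> \<le> card (zero_energy f l M)"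
    using M by simp
  finally show "\<exists>M. real (card (zero_energy f l M)) \<ge>
                  2 ^ (l ^ f) * (1 / (10 * exp 3) / (real f * sqrt l)) ^ (f * l ^ (f - 1))"
    unfolding n_def by blast
qed simp

end
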